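(* Let $\mathcal A=[m]$, $1\le k\le m$, $\mathcal E=2^{\mathcal A}$. Then $$\sqrt{\tfrac{2}{\pi}}\cdot\frac{2^{2^m}}{2^m\cdot m!}\le\mathrm{Ndim}(\mathcal F_{\mathrm{sGST}})\le2^{2^m}\log(k+2).$$
   Context: $\mathcal A_k$ is the set of $k$-subsets of $\mathcal A$. Profiles are $P\in\mathcal E^n$, $n\ge1$; $\mathrm{Hist}(P)\in\mathbb Z_{\ge0}^{\mathcal E}$ counts occurrences. For $G\subseteq\mathcal E$, $\vec w_G$ is its indicator vector; $\vec1$ the all-ones vector. For $\tau:\mathcal A_k\times2^{\mathcal E}\to\{0,\dots,k+1\}$, $\mathrm{GST}_\tau$ maps $P$ to the set of $W\in\mathcal A_k$ with $\left(\vec w_G-\frac{\tau(W,G)}{k}\vec1\right)\cdot\mathrm{Hist}(P)<0$ for all $G\subseteq\mathcal E$. $\mathrm{GST}_\tau$ is symmetric if for every permutation $\sigma$ of $\mathcal A$, every $W\in\mathcal A_k$ and $G\subseteq\mathcal E$, $\tau(W,G)=\tau(\sigma(W),\sigma(G))$, where $\sigma(G)=\{\sigma(A):A\in G\}$. $\mathcal F_{\mathrm{sGST}}$ is the set of all symmetric GST axioms. Natarajan dimension: a finite set of profiles $\mathcal P$ is shattered by $\mathcal F$ if there are $f^0,f^1$ with $f^0(P)\ne f^1(P)$ on $\mathcal P$ such that for every $B\subseteq\mathcal P$ some $f\in\mathcal F$ equals $f^0$ on $B$ and $f^1$ on $\mathcal P\setminus B$; $\mathrm{Ndim}$ is the largest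 size of a shattered set. Logarithms are base 2. *)

theory Defs
  imports Complex_Main "HOL-Library.Extended_Nat"
begin

definition alts :: "nat \<Rightarrow> nat set" where
  "alts m = {1..m}"

definition ballots :: "nat \<Rightarrow> nat set set" where
  "ballots m = Pow (alts m)"

definition committees :: "nat \<Rightarrow> nat \<Rightarrow> nat set set" where
  "committees m k = {W. W \<subseteq> alts m \<and> card W = k}"

definition profiles :: "nat \<Rightarrow> nat set list set" where
  "profiles m = {P. P \<noteq> [] \<and> set P \<subseteq> ballots m}"

definition hist :: "nat set list \<Rightarrow> nat set \<Rightarrow> nat" where
  "hist P e = count_list P e"

definition gst :: "nat \<Rightarrow> nat \<Rightarrow> (nat set \<Rightarrow> nat set set \<Rightarrow> nat) \<Rightarrow> nat set list \<Rightarrow> nat set set" where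
  "gst m k \<tau> P = {W \<in> committees m k. \<forall>G. G \<subseteq> ballots m \<longrightarrow>
      (\<Sum>e\<in>ballots m. ((if e \<in> G then 1 else 0) - real (\<tau> W G) / real k) * real (hist P e)) < 0}"

definition symmetric_tau :: "nat \<Rightarrow> nat \<Rightarrow> (nat set \<Rightarrow> nat set set \<Rightarrow> nat) \<Rightarrow> bool" where
  "symmetric_tau m k \<tau> \<longleftrightarrow> (\<forall>\<sigma>. bij_betw \<sigma> (alts m) (alts m) \<longrightarrow>
      (\<forall>W\<in>committees m k. \<forall>G. G \<subseteq> ballots m \<longrightarrow>
         \<tau> W G = \<tau> (\<sigma> ` W) ((\<lambda>A. \<sigma> ` A) ` G)))"

definition valid_tau :: "nat \<Rightarrow> nat \<Rightarrow> (nat set \<Rightarrow> nat set set \<Rightarrow> nat) \<Rightarrow> bool" where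
  "valid_tau m k \<tau> \<longleftrightarrow> (\<forall>W\<in>committees m k. \<forall>G. G \<subseteq> ballots m \<longrightarrow> \<tau> W G \<le> k + 1)"

definition F_sGST :: "nat \<Rightarrow> nat \<Rightarrow> (nat set list \<Rightarrow> nat set set) set" where
  "F_sGST m k = {gst m k \<tau> | \<tau>. valid_tau m k \<tau> \<and> symmetric_tau m k \<tau>}"

definition shattered :: "('p \<Rightarrow> 'o) set \<Rightarrow> 'p set \<Rightarrow> bool" where
  "shattered F S \<longleftrightarrow> (\<exists>f0 f1. (\<forall>P\<in>S. f0 P \<noteq> f1 P) \<and>
      (\<forall>B\<subseteq>S. \<exists>f\<in>F. (\<forall>P\<in>B. f P = f0 P) \<and> (\<forall>P\<in>S - B. f P = f1 P)))"

definition Ndim :: "'p set \<Rightarrow> ('p \<Rightarrow> 'o) set \<Rightarrow> enat" where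
  "Ndim D F = Sup {enat (card S) | S. S \<subseteq> D \<and> finite S \<and> shattered F S}"

end

theory Submission
  imports Defs "HOL-Combinatorics.Permutations"
begin

text \<open>Upper bound: a symmetric threshold function is determined, as far as the rule it induces is
  concerned, by its values \<open>\<tau>(W\<^sub>0, G)\<close> at one fixed committee \<open>W\<^sub>0\<close>, so there are at most
  \<open>(k + 2)^(2^(2^m))\<close> symmetric GST rules, while a shattered set of size \<open>d\<close> needs \<open>2^d\<close> of them.

  Lower bound: choose one ballot set \<open>G\<close> of size \<open>2^(m-1)\<close> from every orbit under permutations
  of the alternatives and let the profile \<open>P\<^sub>G\<close> list the ballots of \<open>G\<close> once each. On \<open>P\<^sub>G\<close> the
  constraint for a ballot set \<open>G'\<close> reads \<open>|G' \<inter> G| < \<tau>(W, G') / k \<cdot> |G|\<close>: it always holds for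
  \<open>\<tau> = k + 1\<close>, and for \<open>\<tau> = k\<close> it fails only if \<open>G \<subseteq> G'\<close>, i.e. \<open>G' = G\<close> when both have the
  same size. Putting \<open>\<tau> = k\<close> exactly on the orbits of the profiles that are to elect nobody is
  symmetric and realises any prescribed pattern, so these profiles are shattered. There are at
  least \<open>binom(2^m, 2^(m-1)) / m!\<close> orbits, and this central binomial coefficient is at least
  \<open>2^(2^m) / 2^m\<close>.\<close>

lemma shattered_imp_two_power_card_le:
  assumes "shattered F S" "finite F" "finite S"
  shows "2 ^ card S \<le> card F"
proof -
  obtain f0 f1 where distinct: "\<forall>P\<in>S. f0 P \<noteq> f1 P"
    and realize: "\<forall>B\<subseteq>S. \<exists>f\<in>F. (\<forall>P\<in>B. f P = f0 P) \<and> (\<forall>P\<in>S - B. f P = f1 P)"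
    using assms(1) unfolding shattered_def by blast
  have "Pow S \<subseteq> (\<lambda>f. {P\<in>S. f P = f0 P}) ` F"
  proof
    fix B assume "B \<in> Pow S"
    then obtain f where "f \<in> F" "\<forall>P\<in>B. f P = f0 P" "\<forall>P\<in>S - B. f P = f1 P"
      using realize by blast
    then have "B = {P\<in>S. f P = f0 P}" using \<open>B \<in> Pow S\<close> distinct by (auto; metis DiffI)
    then show "B \<in> (\<lambda>f. {P\<in>S. f P = f0 P}) ` F" using \<open>f \<in> F\<close> by blast
  qed
  then have "card (Pow S) \<le> card ((\<lambda>f. {P\<in>S. f P = f0 P}) ` F)"
    using assms(2) by (intro card_mono) simp_all
  also have "\<dots> \<le> card F"
    using assms(2) by (rule card_image_le)
  finally show ?thesis using assms(3) by (simp add: card_Pow)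
qed

lemma Ndim_finite_family:
  assumes "finite F" "F \<noteq> {}"
  obtains d where "Ndim D F = enat d" "2 ^ d \<le> card F"
    "\<And>S. S \<subseteq> D \<Longrightarrow> finite S \<Longrightarrow> shattered F S \<Longrightarrow> card S \<le> d"
proof -
  define C where "C = {card S | S. S \<subseteq> D \<and> finite S \<and> shattered F S}"
  have "shattered F {}" using assms(2) by (auto simp: shattered_def)
  then have "C \<noteq> {}" by (force simp: C_def)
  have bounded: "2 ^ c \<le> card F" if "c \<in> C" for c
    using that shattered_imp_two_power_card_le assms(1) by (auto simp: C_def)
  then have "C \<subseteq> {..card F}"
    by (meson atMost_iff less_exp order.strict_trans2 less_imp_le subsetI)
  then have "finite C" by (rule finite_subset) simp
  have "Ndim D F = Sup (enat ` C)"
    unfolding Ndim_def C_def by (rule arg_cong[where f = Sup]) blast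
  also have "\<dots> = enat (Max C)"
    using \<open>finite C\<close> \<open>C \<noteq> {}\<close> by (simp add: Sup_enat_def mono_Max_commute mono_def)
  finally show thesis
    using that bounded Max_in[OF \<open>finite C\<close> \<open>C \<noteq> {}\<close>] Max_ge[OF \<open>finite C\<close>]
    by (auto simp: C_def)
qed

lemma finite_ballots [simp]: "finite (ballots m)"
  by (simp add: ballots_def alts_def)

lemma card_ballots [simp]: "card (ballots m) = 2 ^ m"
  by (simp add: ballots_def alts_def card_Pow)

lemma bij_betw_restrict_permutes:
  assumes "bij_betw \<sigma> A A"
  obtains p where "p permutes A" "\<forall>x\<in>A. p x = \<sigma> x"
proof
  let ?p = "\<lambda>x. if x \<in> A then \<sigma> x else x"
  have "bij_betw ?p A A" using assms by (rule bij_betw_cong[THEN iffD1, rotated]) simp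
  then show "?p permutes A" by (rule bij_imp_permutes) simp
qed simp

lemma exists_permutes_image_eq:
  assumes "finite A" "V \<subseteq> A" "W \<subseteq> A" "card V = card W"
  obtains p where "p permutes A" "p ` V = W"
proof -
  obtain f where f: "bij_betw f V W"
    using assms finite_same_card_bij finite_subset by meson
  have "card (A - V) = card (A - W)"
    using assms by (simp add: card_Diff_subset finite_subset)
  then obtain g where g: "bij_betw g (A - V) (A - W)"
    using assms finite_same_card_bij by (meson finite_Diff)
  define \<sigma> where "\<sigma> x = (if x \<in> V then f x else g x)" for x
  have on_V: "bij_betw \<sigma> V W" using f by (rule bij_betw_cong[THEN iffD1, rotated]) (simp add: \<sigma>_def)
  have "bij_betw \<sigma> (A - V) (A - W)" using g by (rule bij_betw_cong[THEN iffD1, rotated]) (simp add: \<sigma>_def)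
  then have "bij_betw \<sigma> (V \<union> (A - V)) (W \<union> (A - W))" by (intro bij_betw_combine[OF on_V]) auto
  then have "bij_betw \<sigma> A A" using assms by (simp add: Un_absorb1)
  then obtain p where "p permutes A" "\<forall>x\<in>A. p x = \<sigma> x" by (rule bij_betw_restrict_permutes)
  moreover have "p ` V = W"
    using calculation(2) assms(2) bij_betw_imp_surj_on[OF on_V] by (auto simp: subset_iff image_iff)
  ultimately show thesis using that by blast
qed

lemma permutes_image_ballots:
  assumes "p permutes alts m" "G \<subseteq> ballots m"
  shows "(\<lambda>A. p ` A) ` G \<subseteq> ballots m"
  using assms permutes_image[OF assms(1)] by (auto simp: ballots_def)

definition ballot_orbit :: "nat \<Rightarrow> nat set set \<Rightarrow> nat set set set" where
  "ballot_orbit m H = {(\<lambda>A. p ` A) ` H | p. p permutes alts m}"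

lemma ballot_orbit_self: "H \<in> ballot_orbit m H"
  unfolding ballot_orbit_def by (intro CollectI exI[of _ id]) simp

lemma ballot_orbit_permutes_image_subset:
  assumes "p permutes alts m"
  shows "ballot_orbit m ((\<lambda>A. p ` A) ` H) \<subseteq> ballot_orbit m H"
proof
  fix G assume "G \<in> ballot_orbit m ((\<lambda>A. p ` A) ` H)"
  then obtain q where q: "q permutes alts m" "G = (\<lambda>A. q ` A) ` (\<lambda>A. p ` A) ` H"
    by (auto simp: ballot_orbit_def)
  then have "G = (\<lambda>A. (q \<circ> p) ` A) ` H" by (simp add: image_image image_comp)
  with q(1) assms show "G \<in> ballot_orbit m H"
    unfolding ballot_orbit_def by (blast intro: permutes_compose)
qed

lemma ballot_orbit_permutes_image:
  assumes "p permutes alts m"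
  shows "ballot_orbit m ((\<lambda>A. p ` A) ` H) = ballot_orbit m H"
proof
  have "H = (\<lambda>A. inv p ` A) ` (\<lambda>A. p ` A) ` H"
    by (simp add: image_image permutes_inverses(2)[OF assms])
  then show "ballot_orbit m H \<subseteq> ballot_orbit m ((\<lambda>A. p ` A) ` H)"
    by (metis ballot_orbit_permutes_image_subset permutes_inv[OF assms])
qed (rule ballot_orbit_permutes_image_subset[OF assms])

lemma ballot_orbit_bij_image:
  assumes "bij_betw \<sigma> (alts m) (alts m)" "G \<subseteq> ballots m"
  shows "ballot_orbit m ((\<lambda>A. \<sigma> ` A) ` G) = ballot_orbit m G"
proof -
  obtain p where p: "p permutes alts m" "\<forall>x\<in>alts m. p x = \<sigma> x"
    using assms(1) by (rule bij_betw_restrict_permutes)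
  have "\<sigma> ` A = p ` A" if "A \<in> G" for A
  proof -
    have "A \<subseteq> alts m" using that assms(2) by (auto simp: ballots_def)
    then show ?thesis using p(2) by (intro image_cong) auto
  qed
  then have "(\<lambda>A. \<sigma> ` A) ` G = (\<lambda>A. p ` A) ` G" by (rule image_cong[OF refl])
  then show ?thesis using ballot_orbit_permutes_image[OF p(1)] by simp
qed

lemma ballot_orbit_eq_image: "ballot_orbit m H = (\<lambda>p. (\<lambda>A. p ` A) ` H) ` {p. p permutes alts m}"
  by (auto simp: ballot_orbit_def)

lemma finite_ballot_orbit: "finite (ballot_orbit m H)"
  unfolding ballot_orbit_eq_image by (simp add: alts_def finite_permutations)

lemma card_ballot_orbit_le: "card (ballot_orbit m H) \<le> fact m"
proof -
  have "card {p. p permutes alts m} = fact m"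
    by (rule card_permutations) (simp_all add: alts_def)
  then show ?thesis
    unfolding ballot_orbit_eq_image by (metis card_image_le finite_permutations finite_atLeastAtMost alts_def)
qed

lemma card_mem_ballot_orbit:
  assumes "G \<in> ballot_orbit m H"
  shows "card G = card H"
proof -
  obtain p where p: "p permutes alts m" "G = (\<lambda>A. p ` A) ` H"
    using assms by (auto simp: ballot_orbit_def)
  have "inj_on (\<lambda>A. p ` A) H"
    using permutes_inj[OF p(1)] by (auto simp: inj_on_def inj_image_eq_iff)
  then show ?thesis using p(2) card_image by blast
qed

definition base_committee :: "nat \<Rightarrow> nat set" where
  "base_committee k = {1..k}"

lemma base_committee_in_committees: "k \<le> m \<Longrightarrow> base_committee k \<in> committees m k"
  by (auto simp: base_committee_def committees_def alts_def)

lemma symmetric_tau_base_committee: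
  assumes "symmetric_tau m k \<tau>" "k \<le> m" "p permutes alts m" "p ` base_committee k = W"
    and "G \<subseteq> ballots m"
  shows "\<tau> W G = \<tau> (base_committee k) ((\<lambda>A. inv p ` A) ` G)"
proof -
  have "(\<lambda>A. p ` A) ` (\<lambda>A. inv p ` A) ` G = G"
    by (simp add: image_image permutes_inverses(1)[OF assms(3)])
  moreover have "(\<lambda>A. inv p ` A) ` G \<subseteq> ballots m"
    using permutes_image_ballots[OF permutes_inv[OF assms(3)] assms(5)] .
  ultimately show ?thesis
    using assms(1,4) permutes_imp_bij[OF assms(3)] base_committee_in_committees[OF assms(2)]
    unfolding symmetric_tau_def by metis
qed

lemma gst_cong:
  assumes "\<And>W G. W \<in> committees m k \<Longrightarrow> G \<subseteq> ballots m \<Longrightarrow> \<tau>1 W G = \<tau>2 W G"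
  shows "gst m k \<tau>1 = gst m k \<tau>2"
  using assms unfolding gst_def by (intro ext Collect_cong conj_cong refl) auto

lemma gst_eq_if_base_committee_eq:
  assumes "symmetric_tau m k \<tau>1" "symmetric_tau m k \<tau>2" "k \<le> m"
    and "\<And>G. G \<subseteq> ballots m \<Longrightarrow> \<tau>1 (base_committee k) G = \<tau>2 (base_committee k) G"
  shows "gst m k \<tau>1 = gst m k \<tau>2"
proof (rule gst_cong)
  fix W G assume "W \<in> committees m k" "G \<subseteq> ballots m"
  moreover have "base_committee k \<in> committees m k"
    using assms(3) by (rule base_committee_in_committees)
  ultimately obtain p where p: "p permutes alts m" "p ` base_committee k = W"
    using exists_permutes_image_eq[of "alts m" "base_committee k" W]
    by (auto simp: committees_def alts_def)
  show "\<tau>1 W G = \<tau>2 W G"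
    using symmetric_tau_base_committee[OF _ assms(3) p \<open>G \<subseteq> ballots m\<close>] assms(1,2,4)
      permutes_image_ballots[OF permutes_inv[OF p(1)] \<open>G \<subseteq> ballots m\<close>]
    by metis
qed

lemma card_image_factor_le:
  assumes "finite (r ` T)" "\<And>x y. x \<in> T \<Longrightarrow> y \<in> T \<Longrightarrow> r x = r y \<Longrightarrow> g x = g y"
  shows "finite (g ` T)" "card (g ` T) \<le> card (r ` T)"
proof -
  have factor: "g ` T \<subseteq> (\<lambda>z. g (inv_into T r z)) ` r ` T"
  proof
    fix y assume "y \<in> g ` T"
    then obtain x where x: "x \<in> T" "y = g x" by blast
    have "inv_into T r (r x) \<in> T" "r (inv_into T r (r x)) = r x"
      using x(1) by (simp_all add: inv_into_into f_inv_into_f)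
    then have "y = g (inv_into T r (r x))" using assms(2) x by metis
    then show "y \<in> (\<lambda>z. g (inv_into T r z)) ` r ` T" using x(1) by blast
  qed
  have finite_factor: "finite ((\<lambda>z. g (inv_into T r z)) ` r ` T)" using assms(1) by blast
  with factor show "finite (g ` T)" by (rule finite_subset)
  have "card (g ` T) \<le> card ((\<lambda>z. g (inv_into T r z)) ` r ` T)"
    using finite_factor factor by (rule card_mono)
  also have "\<dots> \<le> card (r ` T)"
    using assms(1) by (rule card_image_le)
  finally show "card (g ` T) \<le> card (r ` T)" .
qed

lemma finite_card_F_sGST:
  assumes "k \<le> m"
  shows "finite (F_sGST m k)" "card (F_sGST m k) \<le> (k + 2) ^ 2 ^ 2 ^ m"
proof -
  define T where "T = {\<tau>. valid_tau m k \<tau> \<and> symmetric_tau m k \<tau>}"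
  define r where "r \<tau> = restrict (\<tau> (base_committee k)) (Pow (ballots m))"
    for \<tau> :: "nat set \<Rightarrow> nat set set \<Rightarrow> nat"
  define T_range where "T_range = (\<Pi>\<^sub>E G \<in> Pow (ballots m). {..k + 1})"
  have "r \<tau> \<in> T_range" if "\<tau> \<in> T" for \<tau>
    unfolding r_def T_range_def using that base_committee_in_committees[OF assms]
    by (intro restrict_PiE_iff[THEN iffD2]) (auto simp: T_def valid_tau_def)
  then have r_range: "r ` T \<subseteq> T_range" by blast
  have finite_range: "finite T_range" and card_range: "card T_range = (k + 2) ^ 2 ^ 2 ^ m"
    by (simp_all add: T_range_def finite_PiE card_PiE card_Pow)
  have finite_r: "finite (r ` T)"
    using r_range finite_range by (rule finite_subset)
  have card_r: "card (r ` T) \<le> (k + 2) ^ 2 ^ 2 ^ m"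
    using card_mono[OF finite_range r_range] card_range by (rule ord_le_eq_trans)
  have factors: "gst m k \<tau>1 = gst m k \<tau>2" if "\<tau>1 \<in> T" "\<tau>2 \<in> T" "r \<tau>1 = r \<tau>2" for \<tau>1 \<tau>2
  proof (rule gst_eq_if_base_committee_eq)
    fix G assume "G \<subseteq> ballots m"
    then show "\<tau>1 (base_committee k) G = \<tau>2 (base_committee k) G"
      using fun_cong[OF that(3), of G] by (simp add: r_def)
  qed (use that(1,2) assms in \<open>simp_all add: T_def\<close>)
  have F_sGST_eq: "F_sGST m k = gst m k ` T"
    unfolding F_sGST_def T_def by blast
  show "finite (F_sGST m k)"
    unfolding F_sGST_eq using finite_r factors by (rule card_image_factor_le)
  have "card (gst m k ` T) \<le> card (r ` T)"
    using finite_r factors by (rule card_image_factor_le)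
  then show "card (F_sGST m k) \<le> (k + 2) ^ 2 ^ 2 ^ m"
    unfolding F_sGST_eq using card_r by (rule le_trans)
qed

lemma exists_transversal:
  assumes "finite X" "\<And>x. x \<in> X \<Longrightarrow> card {y \<in> X. f y = f x} \<le> c"
  obtains R where "R \<subseteq> X" "inj_on f R" "card X \<le> card R * c"
proof
  let ?R = "inv_into X f ` f ` X"
  show "?R \<subseteq> X" by (auto intro: inv_into_into)
  show "inj_on f ?R" by (auto simp: inj_on_def f_inv_into_f)
  have "card X = card (\<Union>y\<in>f ` X. {x \<in> X. f x = y})"
    by (rule arg_cong[where f = card]) blast
  also have "\<dots> \<le> (\<Sum>y\<in>f ` X. card {x \<in> X. f x = y})"
    using assms(1) by (intro card_UN_le) simp
  also have "\<dots> \<le> (\<Sum>y\<in>f ` X. c)"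
    using assms(2) by (intro sum_mono) auto
  also have "\<dots> = card ?R * c"
    by (simp add: card_image inj_on_inv_into)
  finally show "card X \<le> card ?R * c" .
qed

lemma hist_distinct:
  assumes "distinct xs"
  shows "hist xs e = (if e \<in> set xs then 1 else 0)"
  using assms unfolding hist_def by (induction xs) auto

definition profile_of :: "nat set set \<Rightarrow> nat set list" where
  "profile_of G = (SOME xs. distinct xs \<and> set xs = G)"

lemma
  assumes "finite G"
  shows distinct_profile_of: "distinct (profile_of G)"
    and set_profile_of: "set (profile_of G) = G"
proof -
  have "\<exists>xs. distinct xs \<and> set xs = G" using finite_distinct_list[OF assms] by blast
  then have "distinct (profile_of G) \<and> set (profile_of G) = G"
    unfolding profile_of_def by (rule someI_ex)
  then show "distinct (profile_of G)" "set (profile_of G) = G" by simp_all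
qed

lemma gst_profile_of:
  assumes "G \<subseteq> ballots m"
  shows "gst m k \<tau> (profile_of G) = {W \<in> committees m k. \<forall>G'. G' \<subseteq> ballots m \<longrightarrow>
           real (card (G' \<inter> G)) < real (\<tau> W G') / real k * real (card G)}"
proof -
  have "finite G" using assms by (rule finite_subset) simp
  have sum_eq: "(\<Sum>e\<in>ballots m. ((if e \<in> G' then 1 else 0) - c) * real (hist (profile_of G) e))
      = real (card (G' \<inter> G)) - c * real (card G)" for G' c
  proof -
    have "(\<Sum>e\<in>ballots m. ((if e \<in> G' then 1 else 0) - c) * real (hist (profile_of G) e))
        = (\<Sum>e\<in>ballots m. if e \<in> G then (if e \<in> G' then 1 else 0) - c else 0)"
      using \<open>finite G\<close> by (intro sum.cong) (simp_all add: hist_distinct distinct_profile_of set_profile_of)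
    also have "\<dots> = (\<Sum>e\<in>G. (if e \<in> G' then 1 else 0) - c)"
      using assms by (simp add: sum.inter_restrict[symmetric] Int_absorb1)
    also have "\<dots> = real (card (G' \<inter> G)) - c * real (card G)"
      using \<open>finite G\<close> by (simp add: sum_subtractf sum.If_cases Int_commute)
    finally show ?thesis .
  qed
  show ?thesis unfolding gst_def sum_eq by simp
qed

definition orbit_tau :: "nat \<Rightarrow> nat \<Rightarrow> nat set set set set \<Rightarrow> nat set \<Rightarrow> nat set set \<Rightarrow> nat" where
  "orbit_tau m k Q W G = (if ballot_orbit m G \<in> Q then k else k + 1)"

lemma gst_orbit_tau_in_F_sGST: "gst m k (orbit_tau m k Q) \<in> F_sGST m k"
  unfolding F_sGST_def
proof (intro CollectI exI[of _ "orbit_tau m k Q"] conjI refl)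
  show "valid_tau m k (orbit_tau m k Q)" by (simp add: valid_tau_def orbit_tau_def)
  show "symmetric_tau m k (orbit_tau m k Q)"
    by (simp add: symmetric_tau_def orbit_tau_def ballot_orbit_bij_image)
qed

lemma gst_orbit_tau_profile_of_eq_committees:
  assumes "1 \<le> k" "G \<subseteq> ballots m" "G \<noteq> {}" "ballot_orbit m G \<notin> Q"
    and "\<And>G'. ballot_orbit m G' \<in> Q \<Longrightarrow> card G' = card G"
  shows "gst m k (orbit_tau m k Q) (profile_of G) = committees m k"
proof -
  have "finite G" using assms(2) by (rule finite_subset) simp
  with assms(3) have "card G > 0" by (simp add: card_gt_0_iff)
  have "real (card (G' \<inter> G)) < real (orbit_tau m k Q W G') / real k * real (card G)"
    if "G' \<subseteq> ballots m" for W G'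
  proof (cases "ballot_orbit m G' \<in> Q")
    case True
    have "finite G'" using that by (rule finite_subset) simp
    have "\<not> G \<subseteq> G'"
    proof
      assume "G \<subseteq> G'"
      then have "G = G'" using card_subset_eq[OF \<open>finite G'\<close>] assms(5)[OF True] by metis
      then show False using True assms(4) by simp
    qed
    then have "card (G' \<inter> G) < card G"
      using \<open>finite G\<close> by (intro psubset_card_mono) auto
    then show ?thesis using True assms(1) by (simp add: orbit_tau_def)
  next
    case False
    have "card (G' \<inter> G) \<le> card G" using \<open>finite G\<close> by (intro card_mono) auto
    moreover have "real (card G) < real (k + 1) / real k * real (card G)"
      using assms(1) \<open>card G > 0\<close> by (simp add: field_simps)
    ultimately show ?thesis using False by (simp add: orbit_tau_def)
  qed
  then show ?thesis using assms(2) by (auto simp: gst_profile_of)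
qed

lemma gst_orbit_tau_profile_of_eq_empty:
  assumes "1 \<le> k" "G \<subseteq> ballots m" "ballot_orbit m G \<in> Q"
  shows "gst m k (orbit_tau m k Q) (profile_of G) = {}"
proof -
  have "\<not> real (card (G \<inter> G)) < real (orbit_tau m k Q W G) / real k * real (card G)" for W
    using assms(1,3) by (simp add: orbit_tau_def)
  then show ?thesis using assms(2) by (auto simp: gst_profile_of)
qed

lemma shattered_profile_of_transversal:
  assumes "1 \<le> k" "k \<le> m" "R \<subseteq> {G. G \<subseteq> ballots m \<and> card G = s}" "0 < s"
    and "inj_on (ballot_orbit m) R"
  shows "shattered (F_sGST m k) (profile_of ` R)"
  unfolding shattered_def
proof (intro exI conjI)
  show "\<forall>P\<in>profile_of ` R. committees m k \<noteq> {}"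
    using base_committee_in_committees[OF assms(2)] by blast
  show "\<forall>B\<subseteq>profile_of ` R. \<exists>f\<in>F_sGST m k.
          (\<forall>P\<in>B. f P = committees m k) \<and> (\<forall>P\<in>profile_of ` R - B. f P = {})"
  proof (intro allI impI)
  fix B assume B: "B \<subseteq> profile_of ` R"
  define Q where "Q = ballot_orbit m ` {G \<in> R. profile_of G \<notin> B}"
  have card_Q: "card G' = s" if orbit_in_Q: "ballot_orbit m G' \<in> Q" for G'
  proof -
    obtain G where "G \<in> R" "ballot_orbit m G' = ballot_orbit m G"
      using orbit_in_Q by (auto simp: Q_def)
    then have "card G' = card G" using ballot_orbit_self card_mem_ballot_orbit by metis
    then show ?thesis using \<open>G \<in> R\<close> assms(3) by auto
  qed
  have "gst m k (orbit_tau m k Q) P = committees m k" if P: "P \<in> B" for P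
  proof -
    obtain G where G: "G \<in> R" "P = profile_of G" using P B by blast
    have "ballot_orbit m G \<notin> Q"
    proof
      assume "ballot_orbit m G \<in> Q"
      then obtain G2 where G2: "G2 \<in> R" "profile_of G2 \<notin> B" "ballot_orbit m G = ballot_orbit m G2"
        by (auto simp: Q_def)
      then have "G = G2" using inj_onD[OF assms(5) G2(3) G(1)] by blast
      then show False using G2(2) G(2) P by simp
    qed
    moreover have "G \<subseteq> ballots m" "card G = s" using G(1) assms(3) by auto
    moreover from this(2) have "G \<noteq> {}" using assms(4) by auto
    ultimately show ?thesis
      unfolding G(2) using card_Q by (intro gst_orbit_tau_profile_of_eq_committees[OF assms(1)]) auto
  qed
  moreover have "gst m k (orbit_tau m k Q) P = {}" if P: "P \<in> profile_of ` R - B" for P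
  proof -
    obtain G where G: "G \<in> R" "P = profile_of G" "profile_of G \<notin> B" using P by blast
    then have "ballot_orbit m G \<in> Q" by (auto simp: Q_def)
    moreover have "G \<subseteq> ballots m" using G(1) assms(3) by auto
    ultimately show ?thesis
      unfolding G(2) by (intro gst_orbit_tau_profile_of_eq_empty[OF assms(1)])
  qed
  ultimately show "\<exists>f\<in>F_sGST m k. (\<forall>P\<in>B. f P = committees m k) \<and> (\<forall>P\<in>profile_of ` R - B. f P = {})"
    using gst_orbit_tau_in_F_sGST[of m k Q] by blast
  qed
qed

lemma shattered_half_size_profiles:
  assumes "1 \<le> k" "k \<le> m"
  obtains S where "S \<subseteq> profiles m" "finite S" "shattered (F_sGST m k) S"
    "2 ^ m choose 2 ^ (m - 1) \<le> card S * fact m"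
proof -
  define X where "X = {G. G \<subseteq> ballots m \<and> card G = 2 ^ (m - 1)}"
  have "finite X" unfolding X_def by (rule finite_subset[of _ "Pow (ballots m)"]) auto
  moreover have "card {G' \<in> X. ballot_orbit m G' = ballot_orbit m G} \<le> fact m" for G
  proof -
    have "{G' \<in> X. ballot_orbit m G' = ballot_orbit m G} \<subseteq> ballot_orbit m G"
      using ballot_orbit_self by blast
    then have "card {G' \<in> X. ballot_orbit m G' = ballot_orbit m G} \<le> card (ballot_orbit m G)"
      using finite_ballot_orbit by (rule card_mono[rotated])
    then show ?thesis using card_ballot_orbit_le order_trans by blast
  qed
  ultimately obtain R where R: "R \<subseteq> X" "inj_on (ballot_orbit m) R" "card X \<le> card R * fact m"
    by (rule exists_transversal)
  have finite_R: "finite G" if "G \<in> R" for G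
  proof -
    have "G \<subseteq> ballots m" using that R(1) by (auto simp: X_def)
    then show ?thesis by (rule finite_subset) simp
  qed
  have "inj_on profile_of R"
    by (rule inj_onI) (metis finite_R set_profile_of)
  then have "card (profile_of ` R) = card R" by (rule card_image)
  moreover have "card X = 2 ^ m choose 2 ^ (m - 1)"
    unfolding X_def by (simp add: n_subsets)
  moreover have "profile_of ` R \<subseteq> profiles m"
  proof
    fix P assume "P \<in> profile_of ` R"
    then obtain G where G: "G \<in> R" "P = profile_of G" by blast
    then have "G \<subseteq> ballots m" "G \<noteq> {}" using R(1) by (auto simp: X_def)
    moreover have "set P = G" using G(2) finite_R[OF G(1)] by (simp add: set_profile_of)
    ultimately show "P \<in> profiles m" by (auto simp: profiles_def)
  qed
  moreover have "shattered (F_sGST m k) (profile_of ` R)"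
    using assms R(1,2) by (intro shattered_profile_of_transversal) (auto simp: X_def)
  moreover have "finite (profile_of ` R)"
    using R(1) \<open>finite X\<close> by (metis finite_imageI finite_subset)
  ultimately show thesis using that R(3) by simp
qed

lemma central_binomial_div_fact_lower_bound:
  assumes "1 \<le> m"
  shows "sqrt (2 / pi) * (2 ^ 2 ^ m / (2 ^ m * fact m)) \<le> real (2 ^ m choose 2 ^ (m - 1)) / fact m"
proof -
  define n where "n = (2::nat) ^ (m - 1)"
  have two_n: "2 ^ m = 2 * n"
    unfolding n_def using assms by (metis Suc_diff_1 less_le_trans power_Suc zero_less_one)
  have "(2::real) ^ 2 ^ m = 4 ^ n" by (simp add: two_n power_mult)
  moreover have "(2::real) ^ m = 2 * real n" by (metis two_n of_nat_mult of_nat_numeral of_nat_power)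
  ultimately have "2 ^ 2 ^ m / 2 ^ m \<le> real (2 ^ m choose 2 ^ (m - 1))"
    using central_binomial_lower_bound[of n] by (simp add: two_n n_def)
  then have binomial: "2 ^ 2 ^ m / 2 ^ m / fact m \<le> real (2 ^ m choose 2 ^ (m - 1)) / fact m"
    by (rule divide_right_mono) simp
  have "sqrt (2 / pi) \<le> 1" using pi_ge_two by simp
  then have "sqrt (2 / pi) * (2 ^ 2 ^ m / (2 ^ m * fact m)) \<le> 2 ^ 2 ^ m / 2 ^ m / fact m"
    unfolding divide_divide_eq_left by (intro mult_left_le_one_le) auto
  then show ?thesis using binomial by (rule order_trans)
qed

lemma le_mult_log_if_two_power_le:
  assumes "2 ^ d \<le> b ^ N" "0 < b"
  shows "real d \<le> real N * log 2 (real b)"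
proof -
  have "real d = log 2 (2 ^ d)" by simp
  also have "\<dots> \<le> log 2 (real b ^ N)"
    using assms by (subst log_le_cancel_iff) (auto simp flip: of_nat_power)
  also have "\<dots> = real N * log 2 (real b)"
    using assms(2) by (simp add: log_nat_power)
  finally show ?thesis .
qed

theorem theorem10:
  fixes m k :: nat
  assumes "1 \<le> k" and "k \<le> m"
  shows "\<exists>d::nat. Ndim (profiles m) (F_sGST m k) = enat d \<and>
     sqrt (2 / pi) * (2 ^ (2 ^ m) / (2 ^ m * fact m)) \<le> real d \<and>
     real d \<le> 2 ^ (2 ^ m) * log 2 (real k + 2)"
proof -
  obtain S where S: "S \<subseteq> profiles m" "finite S" "shattered (F_sGST m k) S"
    and binomial_le: "2 ^ m choose 2 ^ (m - 1) \<le> card S * fact m"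
    using assms by (rule shattered_half_size_profiles)
  have "F_sGST m k \<noteq> {}" using S(3) by (auto simp: shattered_def)
  with finite_card_F_sGST(1)[OF assms(2)] obtain d where d: "Ndim (profiles m) (F_sGST m k) = enat d"
    "2 ^ d \<le> card (F_sGST m k)" "card S \<le> d"
    using S by (metis Ndim_finite_family)
  have "2 ^ m choose 2 ^ (m - 1) \<le> d * fact m"
    using binomial_le d(3) by (meson le_trans mult_le_mono1)
  then have "real (2 ^ m choose 2 ^ (m - 1)) \<le> real d * fact m"
    by (metis of_nat_fact of_nat_le_iff of_nat_mult)
  then have "real (2 ^ m choose 2 ^ (m - 1)) / fact m \<le> real d"
    by (simp add: divide_le_eq)
  with central_binomial_div_fact_lower_bound[of m] assms
  have lower: "sqrt (2 / pi) * (2 ^ 2 ^ m / (2 ^ m * fact m)) \<le> real d" by linarith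
  have "2 ^ d \<le> (k + 2) ^ 2 ^ 2 ^ m"
    using d(2) finite_card_F_sGST(2)[OF assms(2)] by (rule order_trans)
  then have "real d \<le> real (2 ^ 2 ^ m) * log 2 (real (k + 2))"
    by (rule le_mult_log_if_two_power_le) simp
  then have upper: "real d \<le> 2 ^ 2 ^ m * log 2 (real k + 2)" by (simp add: add.commute)
  show ?thesis using d(1) lower upper by blast
qed

end
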